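(* Let $\mathcal P$ be the set of real polynomials $P\in\mathbb R[X]$ with $\int_0^\infty P(t)e^{-2t}\,dt=1$, and let $\mathcal P_+=\{P\in\mathcal P: P(t)\ge0\ \forall t\ge0\}$. Then for $P\in\mathcal P_+$ the following are equivalent: (i) $P$ is an extreme point of the convex set $\mathcal P_+$; (ii) $P(t)=c\,t^k\prod_{i=1}^{\ell}(t-\lambda_i)^2$ for some $k,\ell\in\mathbb N$, $\lambda_i>0$ for all $i$, and a normalization constant $c>0$.
   Context: An extreme point of a convex set $\mathcal C$ is a point $a\in\mathcal C$ such that $a=\frac12(x+y)$ with $x,y\in\mathcal C$ implies $x=y=a$. *)

theory Defs
  imports "HOL-Analysis.Analysis" "HOL-Computational_Algebra.Polynomial"
begin

definition normPolys :: "real poly set" where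
  "normPolys = {P. ((\<lambda>t. poly P t * exp (-2 * t)) has_integral 1) {0..}}"

definition normPolys_pos :: "real poly set" where
  "normPolys_pos = {P \<in> normPolys. \<forall>t\<ge>0. poly P t \<ge> 0}"

definition is_extreme_point :: "real poly set \<Rightarrow> real poly \<Rightarrow> bool" where
  "is_extreme_point C a \<longleftrightarrow> a \<in> C \<and>
     (\<forall>x\<in>C. \<forall>y\<in>C. a = smult (1/2) (x + y) \<longrightarrow> x = a \<and> y = a)"

end

theory Submission
  imports Defs
begin

(* A polynomial that is nonnegative on [0,oo) factors as B R with R > 0 on [0,oo), where
   B = t^k (t - \<lambda>\<^sub>1)^2 ... (t - \<lambda>\<^sub>l)^2 collects its roots in [0,oo): a positive root
   has even multiplicity because the polynomial does not change sign there.
   If P = B R is extreme, R is constant: otherwise R \<ge> m > 0, and with I the weighted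
   integral of B, the polynomials P \<plusminus> \<epsilon> (I P - B) lie in P+ for small \<epsilon> > 0 and have
   midpoint P.
   Conversely, if P = c B is the midpoint of x and y in P+, then 0 \<le> x \<le> 2 c B on (0,oo);
   peeling off the factors of B one at a time shows that B divides x with a quotient
   bounded between 0 and 2 c, hence constant, and the normalisation forces x = P. *)

lemma poly_nonneg_if_eventually_nonneg:
  fixes Q :: "real poly"
  assumes "\<forall>\<^sub>F t in at a within S. 0 \<le> poly Q t" "at a within S \<noteq> bot"
  shows "0 \<le> poly Q a"
proof (rule tendsto_lowerbound)
  show "(poly Q \<longlongrightarrow> poly Q a) (at a within S)"
    by (intro tendsto_intros)
qed (use assms in simp_all)

lemma poly_nonneg_if_nonneg_right:
  fixes Q :: "real poly"
  assumes "\<forall>t>a. 0 \<le> poly Q t"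
  shows "0 \<le> poly Q a"
  by (rule poly_nonneg_if_eventually_nonneg[of Q a "{a<..}"])
    (use assms in \<open>simp_all add: eventually_at_filter\<close>)

lemma eventually_at_poly_nonzero:
  fixes F :: "real poly"
  assumes "F \<noteq> 0"
  shows "\<forall>\<^sub>F t in at a. poly F t \<noteq> 0"
  using islimpt_finite[OF poly_roots_finite[OF assms], of a]
  by (simp add: islimpt_iff_eventually)

lemma poly_nonneg_cancel_left:
  fixes F Q :: "real poly"
  assumes "F \<noteq> 0" "\<forall>t>0. 0 \<le> poly F t" "\<forall>t>0. 0 \<le> poly (F * Q) t"
  shows "\<forall>t>0. 0 \<le> poly Q t"
proof (intro allI impI)
  fix t :: real
  assume "t > 0"
  have "\<forall>\<^sub>F s in at_right t. poly F s \<noteq> 0"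
    using eventually_at_poly_nonzero[OF assms(1)] by (simp add: eventually_at_split)
  with eventually_at_right_less[of t] have "\<forall>\<^sub>F s in at_right t. 0 \<le> poly Q s"
  proof eventually_elim
    case (elim s)
    with \<open>t > 0\<close> assms(2,3) have "0 < poly F s" "0 \<le> poly F s * poly Q s"
      by (auto simp: less_le)
    then show ?case
      by (simp add: zero_le_mult_iff)
  qed
  then show "0 \<le> poly Q t"
    by (rule poly_nonneg_if_eventually_nonneg) simp
qed

lemma poly_root_if_linear_factor_nonneg:
  fixes Q :: "real poly"
  assumes "\<forall>\<^sub>F t in at a. 0 \<le> poly ([:-a, 1:] * Q) t"
  shows "poly Q a = 0"
proof -
  have "poly ([:-a, 1:] * Q) t = (t - a) * poly Q t" for t
    by (simp add: algebra_simps)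
  then have "\<forall>\<^sub>F t in at_right a. 0 \<le> (t - a) * poly Q t"
    "\<forall>\<^sub>F t in at_left a. 0 \<le> (t - a) * poly Q t"
    using assms by (simp_all add: eventually_at_split)
  moreover have "\<forall>\<^sub>F t in at_right a. a < t" "\<forall>\<^sub>F t in at_left a. t < a"
    by (simp_all add: eventually_at_filter)
  ultimately have right: "\<forall>\<^sub>F t in at_right a. 0 \<le> (t - a) * poly Q t \<and> a < t"
    and left: "\<forall>\<^sub>F t in at_left a. 0 \<le> (t - a) * poly Q t \<and> t < a"
    by (simp_all add: eventually_conj_iff)
  have "0 \<le> poly Q a"
    by (rule poly_nonneg_if_eventually_nonneg, use right in eventually_elim)
      (auto simp: zero_le_mult_iff)
  moreover have "0 \<le> poly (- Q) a"
    by (rule poly_nonneg_if_eventually_nonneg, use left in eventually_elim)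
      (auto simp: zero_le_mult_iff)
  ultimately show ?thesis
    by simp
qed

lemma square_dvd_if_nonneg_root:
  fixes Q :: "real poly"
  assumes "a > 0" "\<forall>t>0. 0 \<le> poly Q t" "poly Q a = 0"
  shows "[:-a, 1:]^2 dvd Q"
proof -
  obtain Q1 where Q1: "Q = [:-a, 1:] * Q1"
    using assms(3) poly_eq_0_iff_dvd by blast
  have "\<forall>\<^sub>F t in at a. t \<in> {0<..}"
    using assms(1) by (intro eventually_at_in_open') auto
  then have "\<forall>\<^sub>F t in at a. 0 \<le> poly ([:-a, 1:] * Q1) t"
    by eventually_elim (use assms(2) Q1 in auto)
  then have "poly Q1 a = 0"
    by (rule poly_root_if_linear_factor_nonneg)
  then obtain Q2 where "Q1 = [:-a, 1:] * Q2"
    using poly_eq_0_iff_dvd by blast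
  with Q1 have "Q = [:-a, 1:]^2 * Q2"
    by (simp only: power2_eq_square mult.assoc)
  then show ?thesis
    by (rule dvdI)
qed

inductive root_poly :: "real poly \<Rightarrow> bool" where
  root_poly_1: "root_poly 1"
| root_poly_zero_root: "root_poly B \<Longrightarrow> root_poly ([:0, 1:] * B)"
| root_poly_double_root: "a > 0 \<Longrightarrow> root_poly B \<Longrightarrow> root_poly ([:-a, 1:]^2 * B)"

lemma root_poly_nonneg: "root_poly B \<Longrightarrow> t \<ge> 0 \<Longrightarrow> 0 \<le> poly B t"
  by (induction rule: root_poly.induct) auto

lemma root_poly_explicit:
  fixes lam :: "nat \<Rightarrow> real"
  assumes "\<forall>i<l. lam i > 0"
  shows "root_poly ([:0, 1:]^k * (\<Prod>i<l. [:-lam i, 1:]^2))"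
proof (induction k)
  case 0
  from assms show ?case
    by (induction l) (auto simp: mult.commute intro: root_poly.intros)
next
  case (Suc k)
  then show ?case
    using root_poly_zero_root by (fastforce simp: mult.assoc)
qed

lemma root_poly_iff:
  "root_poly B \<longleftrightarrow>
     (\<exists>k l (lam :: nat \<Rightarrow> real). (\<forall>i<l. lam i > 0) \<and> B = [:0, 1:]^k * (\<Prod>i<l. [:-lam i, 1:]^2))"
  (is "_ \<longleftrightarrow> (\<exists>k l lam. ?explicit k l lam B)")
proof
  assume "root_poly B"
  then show "\<exists>k l lam. ?explicit k l lam B"
  proof (induction rule: root_poly.induct)
    case root_poly_1
    show ?case
      by (rule exI[of _ "0::nat"], rule exI[of _ "0::nat"]) simp
  next
    case (root_poly_zero_root B)
    then obtain k and l :: nat and lam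
      where "\<forall>i<l. lam i > 0" "B = [:0, 1:]^k * (\<Prod>i<l. [:-lam i, 1:]^2)"
      by blast
    then show ?case
      by (intro exI[of _ "Suc k"] exI[of _ l] exI[of _ lam]) (simp add: mult.assoc)
  next
    case (root_poly_double_root a B)
    then obtain k and l :: nat and lam
      where lam: "\<forall>i<l. lam i > 0" "B = [:0, 1:]^k * (\<Prod>i<l. [:-lam i, 1:]^2)"
      by blast
    have "(\<Prod>i<l. [:-(lam(l := a)) i, 1:]^2) = (\<Prod>i<l. [:-lam i, 1:]^2)"
      by (rule prod.cong) auto
    then have "[:-a, 1:]^2 * B = [:0, 1:]^k * (\<Prod>i<Suc l. [:-(lam(l := a)) i, 1:]^2)"
      using lam(2) by (simp add: ac_simps)
    moreover have "\<forall>i<Suc l. (lam(l := a)) i > 0"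
      using lam(1) root_poly_double_root(1) by (simp add: less_Suc_eq)
    ultimately show ?case
      by blast
  qed
qed (auto intro: root_poly_explicit)

lemma nonneg_poly_root_factorization:
  fixes Q :: "real poly"
  assumes "Q \<noteq> 0" "\<forall>t>0. 0 \<le> poly Q t"
  shows "\<exists>B R. root_poly B \<and> (\<forall>t\<ge>0. 0 < poly R t) \<and> Q = B * R"
  using assms
proof (induction "degree Q" arbitrary: Q rule: less_induct)
  case less
  have split_off: "\<exists>B R. root_poly B \<and> (\<forall>t\<ge>0. 0 < poly R t) \<and> Q = B * R"
    if Q: "Q = F * Q'" and F: "0 < degree F" "\<forall>t>0. 0 \<le> poly F t"
      and root_poly_F: "\<And>B. root_poly B \<Longrightarrow> root_poly (F * B)" for F Q'
  proof -
    have "F \<noteq> 0" "Q' \<noteq> 0"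
      using F(1) Q less.prems(1) by auto
    then have "degree Q' < degree Q"
      using Q F(1) by (simp add: degree_mult_eq)
    moreover have "\<forall>t>0. 0 \<le> poly Q' t"
      using poly_nonneg_cancel_left[OF \<open>F \<noteq> 0\<close> F(2)] Q less.prems(2) by blast
    ultimately obtain B R where "root_poly B" "\<forall>t\<ge>0. 0 < poly R t" "Q' = B * R"
      using less.hyps \<open>Q' \<noteq> 0\<close> by blast
    with Q root_poly_F show ?thesis
      by (metis mult.assoc)
  qed
  consider "\<forall>t\<ge>0. poly Q t \<noteq> 0" | "poly Q 0 = 0" | a where "a > 0" "poly Q a = 0"
    by (metis order_le_less)
  then show ?case
  proof cases
    case 1
    have "0 \<le> poly Q 0"
      using less.prems(2) by (rule poly_nonneg_if_nonneg_right)
    with 1 less.prems(2) have "\<forall>t\<ge>0. 0 < poly Q t"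
      by (metis order_le_less)
    then show ?thesis
      using root_poly_1 by fastforce
  next
    case 2
    then have "[:0, 1:] dvd Q"
      using poly_eq_0_iff_dvd[of Q 0] by simp
    then obtain Q' where "Q = [:0, 1:] * Q'" ..
    then show ?thesis
      by (rule split_off[OF _ _ _ root_poly_zero_root]) auto
  next
    case 3
    then obtain Q' where "Q = [:-a, 1:]^2 * Q'"
      using square_dvd_if_nonneg_root less.prems(2) by blast
    then show ?thesis
      by (rule split_off[OF _ _ _ root_poly_double_root[OF \<open>a > 0\<close>]]) (auto simp: degree_power_eq)
  qed
qed

lemma dominated_quotient:
  fixes F x G :: "real poly"
  assumes "F \<noteq> 0" "\<forall>t>0. 0 \<le> poly F t" "F dvd x"
    and "\<forall>t>0. 0 \<le> poly x t \<and> poly x t \<le> poly (F * G) t"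
  shows "\<exists>x1. x = F * x1 \<and> (\<forall>t>0. 0 \<le> poly x1 t \<and> poly x1 t \<le> poly G t)"
proof -
  obtain x1 where x1: "x = F * x1"
    using assms(3) ..
  have "\<forall>t>0. 0 \<le> poly (F * x1) t" "\<forall>t>0. 0 \<le> poly (F * (G - x1)) t"
    using assms(4) unfolding x1 by (simp_all add: algebra_simps)
  then have "\<forall>t>0. 0 \<le> poly x1 t" "\<forall>t>0. 0 \<le> poly (G - x1) t"
    using poly_nonneg_cancel_left[OF assms(1,2)] by blast+
  with x1 show ?thesis
    by auto
qed

lemma root_poly_dvd_if_dominated:
  fixes x H :: "real poly"
  assumes "root_poly B" "\<forall>t>0. 0 \<le> poly x t \<and> poly x t \<le> poly (B * H) t"
  shows "\<exists>x'. x = B * x' \<and> (\<forall>t>0. 0 \<le> poly x' t \<and> poly x' t \<le> poly H t)"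
  using assms
proof (induction arbitrary: x rule: root_poly.induct)
  case root_poly_1
  then show ?case
    by (intro exI[of _ x]) simp
next
  case (root_poly_zero_root B)
  have "\<forall>t>0. 0 \<le> poly x t" "\<forall>t>0. 0 \<le> poly ([:0, 1:] * (B * H) - x) t"
    using root_poly_zero_root.prems by (simp_all add: mult.assoc)
  then have "0 \<le> poly x 0" "0 \<le> poly ([:0, 1:] * (B * H) - x) 0"
    by (simp_all only: poly_nonneg_if_nonneg_right)
  then have "[:0, 1:] dvd x"
    using poly_eq_0_iff_dvd[of x 0] by simp
  then obtain x1
    where x1: "x = [:0, 1:] * x1" "\<forall>t>0. 0 \<le> poly x1 t \<and> poly x1 t \<le> poly (B * H) t"
    using dominated_quotient[of "[:0, 1:]" x "B * H"] root_poly_zero_root.prems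
    by (auto simp: mult.assoc)
  then obtain x' where x': "x1 = B * x'" "\<forall>t>0. 0 \<le> poly x' t \<and> poly x' t \<le> poly H t"
    using root_poly_zero_root.IH by blast
  from x1(1) x'(1) have "x = ([:0, 1:] * B) * x'"
    by (simp only: mult.assoc)
  with x'(2) show ?case
    by blast
next
  case (root_poly_double_root a B)
  have "poly x a = 0"
    using root_poly_double_root.prems[rule_format, of a] root_poly_double_root.hyps(1) by simp
  then have "[:-a, 1:]^2 dvd x"
    using square_dvd_if_nonneg_root root_poly_double_root by blast
  then obtain x1
    where x1: "x = [:-a, 1:]^2 * x1" "\<forall>t>0. 0 \<le> poly x1 t \<and> poly x1 t \<le> poly (B * H) t"
    using dominated_quotient[of "[:-a, 1:]^2" x "B * H"] root_poly_double_root.prems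
    by (auto simp: mult.assoc)
  then obtain x' where x': "x1 = B * x'" "\<forall>t>0. 0 \<le> poly x' t \<and> poly x' t \<le> poly H t"
    using root_poly_double_root.IH by blast
  from x1(1) x'(1) have "x = ([:-a, 1:]^2 * B) * x'"
    by (simp only: mult.assoc)
  with x'(2) show ?case
    by blast
qed

lemma poly_abs_tendsto_at_top:
  fixes p :: "real poly"
  assumes "0 < degree p"
  shows "filterlim (\<lambda>t. \<bar>poly p t\<bar>) at_top at_top"
proof -
  have "filterlim (poly p) at_infinity at_top"
    using filterlim_poly_at_infinity[OF assms] order_refl at_top_le_at_infinity by (rule filterlim_mono)
  then show ?thesis
    using filterlim_at_infinity_imp_norm_at_top by fastforce
qed

lemma poly_bounded_on_halfline_imp_degree_0:
  fixes p :: "real poly"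
  assumes "\<forall>t>0. \<bar>poly p t\<bar> \<le> C"
  shows "degree p = 0"
proof (rule ccontr)
  assume "degree p \<noteq> 0"
  then have "\<forall>\<^sub>F t in at_top. C + 1 \<le> \<bar>poly p t\<bar>"
    using poly_abs_tendsto_at_top[of p] unfolding filterlim_at_top by simp
  then obtain N where "\<forall>t\<ge>N. C + 1 \<le> \<bar>poly p t\<bar>"
    unfolding eventually_at_top_linorder by blast
  then have "C + 1 \<le> \<bar>poly p (max N 1)\<bar>"
    by simp
  moreover have "\<bar>poly p (max N 1)\<bar> \<le> C"
    using assms by simp
  ultimately show False
    by simp
qed

lemma poly_pos_on_halfline_bounded_below:
  fixes R :: "real poly"
  assumes "\<forall>t\<ge>0. 0 < poly R t"
  shows "\<exists>m>0. \<forall>t\<ge>0. m \<le> poly R t"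
proof -
  have "\<forall>\<^sub>F t in at_top. poly R 0 \<le> poly R t"
  proof (cases "degree R = 0")
    case True
    then obtain c where "R = [:c:]"
      by (rule degree_eq_zeroE)
    then show ?thesis
      by simp
  next
    case False
    then have "\<forall>\<^sub>F t in at_top. poly R 0 \<le> \<bar>poly R t\<bar>"
      using poly_abs_tendsto_at_top[of R] unfolding filterlim_at_top by simp
    with eventually_ge_at_top[of 0] show ?thesis
    proof eventually_elim
      case (elim t)
      with assms show ?case
        by (simp add: abs_of_pos)
    qed
  qed
  then obtain N where N: "\<forall>t\<ge>N. poly R 0 \<le> poly R t"
    unfolding eventually_at_top_linorder by blast
  have "continuous_on {0..max N 0} (poly R)"
    by (rule continuous_on_poly[OF continuous_on_id])
  then obtain t0 where t0: "t0 \<in> {0..max N 0}" "\<forall>t\<in>{0..max N 0}. poly R t0 \<le> poly R t"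
    using continuous_attains_inf[OF compact_Icc] by (metis atLeastAtMost_iff empty_iff max.cobounded2 order_refl)
  have "poly R t0 \<le> poly R t" if "t \<ge> 0" for t
  proof (cases "t \<le> max N 0")
    case True
    with t0(2) that show ?thesis
      by simp
  next
    case False
    with N have "poly R 0 \<le> poly R t"
      by simp
    moreover have "poly R t0 \<le> poly R 0"
      using t0(2) by simp
    ultimately show ?thesis
      by simp
  qed
  moreover have "0 < poly R t0"
    using assms t0(1) by simp
  ultimately show ?thesis
    by blast
qed

lemma normPolys_nonzero:
  assumes "P \<in> normPolys"
  shows "P \<noteq> 0"
proof
  assume "P = 0"
  with assms have "((\<lambda>t. 0) has_integral (1::real)) {0..}"
    by (simp add: normPolys_def)
  then show False
    using has_integral_unique[OF has_integral_0] by fastforce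
qed

lemma normPolys_smult_unique:
  assumes "smult a B \<in> normPolys" "smult c B \<in> normPolys"
  shows "a = c"
proof -
  let ?f = "\<lambda>t. poly B t * exp (-2 * t)"
  have "c \<noteq> 0"
    using normPolys_nonzero[OF assms(2)] by auto
  have "((\<lambda>t. c * ?f t) has_integral 1) {0..}"
    using assms(2) by (simp add: normPolys_def mult.assoc)
  then have "((\<lambda>t. (a / c) * (c * ?f t)) has_integral (a / c) * 1) {0..}"
    by (rule has_integral_mult_right)
  moreover have "(\<lambda>t. (a / c) * (c * ?f t)) = (\<lambda>t. poly (smult a B) t * exp (-2 * t))"
    using \<open>c \<noteq> 0\<close> by auto
  ultimately have "((\<lambda>t. poly (smult a B) t * exp (-2 * t)) has_integral a / c) {0..}"
    by simp
  then have "a / c = 1"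
    using assms(1) has_integral_unique unfolding normPolys_def by blast
  with \<open>c \<noteq> 0\<close> show ?thesis
    by simp
qed

lemma integrable_if_dominated_by_normPoly:
  fixes B :: "real poly"
  assumes "P \<in> normPolys" "\<forall>t\<ge>0. \<bar>poly B t\<bar> \<le> C * poly P t"
  shows "(\<lambda>t. poly B t * exp (-2 * t)) integrable_on {0..}"
proof -
  have "(\<lambda>t. C * (poly P t * exp (-2 * t))) integrable_on {0..}"
    using assms(1) has_integral_mult_right unfolding normPolys_def by blast
  then have "(\<lambda>t. poly B t * exp (-2 * t)) absolutely_integrable_on {0..}"
  proof (rule measurable_bounded_by_integrable_imp_absolutely_integrable[rotated 2])
    show "(\<lambda>t. poly B t * exp (-2 * t)) \<in> borel_measurable (lebesgue_on {0..})"
      by (intro continuous_imp_measurable_on_sets_lebesgue continuous_intros) auto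
    show "norm (poly B t * exp (-2 * t)) \<le> C * (poly P t * exp (-2 * t))" if "t \<in> {0..}" for t
      using assms(2) that by (simp add: abs_mult mult_right_mono)
  qed simp
  then show ?thesis
    using set_lebesgue_integral_eq_integral(1) by blast
qed

lemma extreme_point_symmetric_perturbation:
  assumes "is_extreme_point C P" "P + D \<in> C" "P - D \<in> C"
  shows "D = 0"
proof -
  have "P = smult (1/2 + 1/2) P"
    by simp
  also have "\<dots> = smult (1/2) ((P + D) + (P - D))"
    by (simp only: smult_add_left smult_add_right smult_diff_right)
  finally have "P = smult (1/2) ((P + D) + (P - D))" .
  with assms have "P + D = P"
    unfolding is_extreme_point_def by blast
  then show ?thesis
    by simp
qed

lemma extreme_point_zero_integral_perturbation:
  assumes "is_extreme_point normPolys_pos P"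
    and "((\<lambda>t. poly D t * exp (-2 * t)) has_integral 0) {0..}"
    and "\<forall>t\<ge>0. \<bar>poly D t\<bar> \<le> poly P t"
  shows "D = 0"
proof -
  have P: "((\<lambda>t. poly P t * exp (-2 * t)) has_integral 1) {0..}"
    using assms(1) by (simp add: is_extreme_point_def normPolys_pos_def normPolys_def)
  have shifted: "P + E \<in> normPolys_pos"
    if E: "((\<lambda>t. poly E t * exp (-2 * t)) has_integral 0) {0..}" "\<forall>t\<ge>0. \<bar>poly E t\<bar> \<le> poly P t"
    for E
  proof -
    have "((\<lambda>t. poly P t * exp (-2 * t) + poly E t * exp (-2 * t)) has_integral 1 + 0) {0..}"
      using P E(1) by (rule has_integral_add)
    then have "((\<lambda>t. poly (P + E) t * exp (-2 * t)) has_integral 1) {0..}"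
      by (simp add: distrib_right)
    moreover have "0 \<le> poly (P + E) t" if "t \<ge> 0" for t
      using E(2) that by (force simp: abs_le_iff)
    ultimately show ?thesis
      by (simp add: normPolys_pos_def normPolys_def)
  qed
  have "P + D \<in> normPolys_pos"
    using assms(2,3) by (rule shifted)
  moreover have "P + - D \<in> normPolys_pos"
    using has_integral_neg[OF assms(2)] assms(3) by (intro shifted) simp_all
  then have "P - D \<in> normPolys_pos"
    by simp
  ultimately show ?thesis
    by (rule extreme_point_symmetric_perturbation[OF assms(1)])
qed

lemma extreme_point_cofactor_degree_0:
  fixes P B R :: "real poly"
  assumes ext: "is_extreme_point normPolys_pos P" and PBR: "P = B * R"
    and B: "\<forall>t\<ge>0. 0 \<le> poly B t" and R: "\<forall>t\<ge>0. 0 < poly R t"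
  shows "degree R = 0"
proof -
  let ?w = "\<lambda>t::real. exp (-2 * t)"
  have P: "P \<in> normPolys"
    using ext by (simp add: is_extreme_point_def normPolys_pos_def)
  obtain m where m: "m > 0" "\<forall>t\<ge>0. m \<le> poly R t"
    using poly_pos_on_halfline_bounded_below[OF R] by blast
  have "\<bar>poly B t\<bar> \<le> (1 / m) * poly P t" if "t \<ge> 0" for t
  proof -
    have "poly B t * m \<le> poly B t * poly R t"
      using B m(2) that by (simp add: mult_left_mono)
    with B m(1) that show ?thesis
      by (simp add: PBR field_simps)
  qed
  then obtain I where I: "((\<lambda>t. poly B t * ?w t) has_integral I) {0..}"
    using integrable_if_dominated_by_normPoly[OF P] by blast
  have "0 \<le> I"
    using has_integral_nonneg[OF I] B by simp
  define \<epsilon> where "\<epsilon> = min m (1 / (I + 1))"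
  have \<epsilon>: "0 < \<epsilon>" "\<epsilon> \<le> m" "\<epsilon> * I \<le> 1"
    using m(1) \<open>0 \<le> I\<close> by (auto simp: \<epsilon>_def min_def field_simps)
  define D where "D = smult \<epsilon> (smult I P - B)"
  \<comment> \<open>P \<plusminus> D = B ((1 \<plusminus> \<epsilon> I) R \<mp> \<epsilon>), which is nonnegative by the choice of \<epsilon>.\<close>
  have "((\<lambda>t. \<epsilon> * (I * (poly P t * ?w t) - poly B t * ?w t)) has_integral \<epsilon> * (I * 1 - I)) {0..}"
    using P I unfolding normPolys_def by (intro has_integral_mult_right has_integral_diff) auto
  then have "((\<lambda>t. poly D t * ?w t) has_integral 0) {0..}"
    by (simp add: D_def algebra_simps)
  moreover have "\<bar>poly D t\<bar> \<le> poly P t" if "t \<ge> 0" for t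
  proof -
    have "0 < poly R t"
      using R that by simp
    then have "\<epsilon> * I * poly R t \<le> poly R t" "0 \<le> \<epsilon> * I * poly R t"
      using \<epsilon>(1,3) \<open>0 \<le> I\<close> by (simp_all add: mult_left_le_one_le)
    moreover have "\<epsilon> \<le> poly R t"
      using \<epsilon>(2) m(2) that by fastforce
    ultimately have bound: "\<bar>\<epsilon> * (I * poly R t - 1)\<bar> \<le> poly R t"
      using \<epsilon>(1) unfolding abs_le_iff right_diff_distrib mult.assoc mult_1_right
      by (intro conjI) linarith+
    have "poly D t = poly B t * (\<epsilon> * (I * poly R t - 1))"
      by (simp add: D_def PBR algebra_simps)
    then have "\<bar>poly D t\<bar> = poly B t * \<bar>\<epsilon> * (I * poly R t - 1)\<bar>"
      using B that by (simp add: abs_mult)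
    also have "\<dots> \<le> poly B t * poly R t"
      using bound B that by (simp add: mult_left_mono)
    finally show ?thesis
      by (simp add: PBR)
  qed
  ultimately have "D = 0"
    using extreme_point_zero_integral_perturbation[OF ext] by blast
  moreover have "D = smult \<epsilon> (B * (smult I R - 1))"
    by (simp add: D_def PBR algebra_simps)
  moreover have "B \<noteq> 0"
    using normPolys_nonzero[OF P] PBR by auto
  ultimately have "smult I R = 1"
    using \<epsilon>(1) by simp
  then show ?thesis
    by (metis degree_1 degree_smult_eq smult_0_left zero_neq_one)
qed

lemma root_poly_dominated_eq:
  fixes x B :: "real poly"
  assumes "root_poly B" "smult c B \<in> normPolys" "x \<in> normPolys"
    and "\<forall>t>0. 0 \<le> poly x t \<and> poly x t \<le> C * poly B t"
  shows "x = smult c B"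
proof -
  have "\<forall>t>0. 0 \<le> poly x t \<and> poly x t \<le> poly (B * [:C:]) t"
    using assms(4) by (simp add: mult.commute)
  then obtain x' where x': "x = B * x'" "\<forall>t>0. 0 \<le> poly x' t \<and> poly x' t \<le> poly [:C:] t"
    using root_poly_dvd_if_dominated[OF assms(1)] by blast
  then have "\<forall>t>0. \<bar>poly x' t\<bar> \<le> C"
    by simp
  then have "degree x' = 0"
    by (rule poly_bounded_on_halfline_imp_degree_0)
  then obtain a where "x' = [:a:]"
    by (rule degree_eq_zeroE)
  with x'(1) have "x = smult a B"
    by simp
  moreover from this assms(2,3) have "a = c"
    using normPolys_smult_unique by blast
  ultimately show ?thesis
    by simp
qed

lemma root_poly_smult_extreme_point:
  assumes "root_poly B" "smult c B \<in> normPolys_pos"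
  shows "is_extreme_point normPolys_pos (smult c B)"
  unfolding is_extreme_point_def
proof (intro conjI ballI impI)
  have cB: "smult c B \<in> normPolys"
    using assms(2) by (simp add: normPolys_pos_def)
  fix x y
  assume x: "x \<in> normPolys_pos" and y: "y \<in> normPolys_pos"
    and mid: "smult c B = smult (1/2) (x + y)"
  have sum: "poly x t + poly y t = 2 * c * poly B t" for t
  proof -
    have "c * poly B t = (poly x t + poly y t) / 2"
      using arg_cong[OF mid, of "\<lambda>p. poly p t"] by simp
    then show ?thesis
      by simp
  qed
  have bounds: "0 \<le> poly x t \<and> poly x t \<le> 2 * c * poly B t"
    "0 \<le> poly y t \<and> poly y t \<le> 2 * c * poly B t" if "t > 0" for t
  proof -
    have "0 \<le> poly x t" "0 \<le> poly y t"
      using x y that by (simp_all add: normPolys_pos_def)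
    with sum[of t] show "0 \<le> poly x t \<and> poly x t \<le> 2 * c * poly B t"
      "0 \<le> poly y t \<and> poly y t \<le> 2 * c * poly B t"
      by linarith+
  qed
  show "x = smult c B"
    using root_poly_dominated_eq[OF assms(1) cB, of x "2 * c"] x bounds(1)
    by (simp add: normPolys_pos_def)
  show "y = smult c B"
    using root_poly_dominated_eq[OF assms(1) cB, of y "2 * c"] y bounds(2)
    by (simp add: normPolys_pos_def)
qed (rule assms(2))

lemma extreme_point_imp_smult_root_poly:
  assumes ext: "is_extreme_point normPolys_pos P"
  shows "\<exists>c B. c > 0 \<and> root_poly B \<and> P = smult c B"
proof -
  have "P \<noteq> 0" "\<forall>t>0. 0 \<le> poly P t"
    using ext normPolys_nonzero by (auto simp: is_extreme_point_def normPolys_pos_def)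
  then obtain B R where B: "root_poly B" and R: "\<forall>t\<ge>0. 0 < poly R t" and PBR: "P = B * R"
    using nonneg_poly_root_factorization by blast
  have "degree R = 0"
    using extreme_point_cofactor_degree_0[OF ext PBR] root_poly_nonneg[OF B] R by blast
  then obtain r where "R = [:r:]"
    by (rule degree_eq_zeroE)
  with R PBR B show ?thesis
    by auto
qed

theorem lemma9:
  fixes P :: "real poly"
  assumes "P \<in> normPolys_pos"
  shows "is_extreme_point normPolys_pos P \<longleftrightarrow>
    (\<exists>(c::real) (k::nat) (l::nat) (lam::nat \<Rightarrow> real).
        c > 0 \<and> (\<forall>i<l. lam i > 0) \<and>
        P = smult c ([:0, 1:] ^ k * (\<Prod>i<l. [:- lam i, 1:] ^ 2)))"
proof
  assume "is_extreme_point normPolys_pos P"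
  then obtain c B where "c > 0" "root_poly B" "P = smult c B"
    using extreme_point_imp_smult_root_poly by blast
  moreover obtain k and l :: nat and lam :: "nat \<Rightarrow> real"
    where "\<forall>i<l. lam i > 0" "B = [:0, 1:] ^ k * (\<Prod>i<l. [:- lam i, 1:] ^ 2)"
    using \<open>root_poly B\<close> unfolding root_poly_iff by blast
  ultimately show "\<exists>(c::real) (k::nat) (l::nat) (lam::nat \<Rightarrow> real). c > 0 \<and> (\<forall>i<l. lam i > 0) \<and>
      P = smult c ([:0, 1:] ^ k * (\<Prod>i<l. [:- lam i, 1:] ^ 2))"
    by (intro exI[of _ c] exI[of _ k] exI[of _ l] exI[of _ lam]) simp
next
  assume "\<exists>(c::real) (k::nat) (l::nat) (lam::nat \<Rightarrow> real). c > 0 \<and> (\<forall>i<l. lam i > 0) \<and>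
      P = smult c ([:0, 1:] ^ k * (\<Prod>i<l. [:- lam i, 1:] ^ 2))"
  then obtain c k and l :: nat and lam :: "nat \<Rightarrow> real"
    where "\<forall>i<l. lam i > 0" and P: "P = smult c ([:0, 1:] ^ k * (\<Prod>i<l. [:- lam i, 1:] ^ 2))"
    by blast
  then have "root_poly ([:0, 1:] ^ k * (\<Prod>i<l. [:- lam i, 1:] ^ 2))"
    unfolding root_poly_iff by blast
  with assms show "is_extreme_point normPolys_pos P"
    unfolding P by (rule root_poly_smult_extreme_point[rotated])
qed

end
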